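(* Let $u\ge0$ be a function in the Kato class $K_d$ satisfying $u(x)=C_0|x|^{-\alpha}(1+o(1))$ as $|x|\to\infty$ for some $\alpha>d$ and $C_0>0$, and let $(\xi_q)_{q\in\mathbb{Z}^d}$ be i.i.d. $\mathbb{R}^d$-valued random variables with $\mathbb{P}(\xi_q\in dx)=\exp(-|x|^\theta)\,dx/Z(d,\theta)$ for some $\theta>0$. Then almost every sample function of $V_\xi(x)=\sum_{q\in\mathbb{Z}^d}u(x-q-\xi_q)$ belongs to the local Kato class $K_{d,loc}$.
   Context: $Z(d,\theta)$ is the normalizing constant. The Kato class $K_d$: for $d\ge2$, the set of measurable $V$ with $\lim_{r\downarrow0}\sup_x\int_{|x-y|<r}g_d(x-y)|V(y)|\,dy=0$, where $g_d(x)=|x|^{2-d}$ for $d\ge3$ and $g_2(x)=-\log|x|$; for $d=1$, the set of $V$ with $\sup_x\int_{|x-y|\le1}|V(y)|\,dy<\infty$. $K_{d,loc}$ is the set of $V$ such that $1_{B(R)}V\in K_d$ for every $R>0$, where $B(R)$ is the ball of radius $R$ centered at $0$. *)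

theory Defs
  imports "HOL-Probability.Probability"
begin

definition green_kernel :: "real ^ 'n \<Rightarrow> real" where
  "green_kernel x = (if CARD('n) \<ge> 3 then norm x powr (2 - real CARD('n))
                     else - ln (norm x))"

text \<open>Kato class K_d, for nonnegative extended-valued (ennreal) functions;
  |V| = V here.\<close>
definition kato_class :: "(real ^ 'n \<Rightarrow> ennreal) \<Rightarrow> bool" where
  "kato_class V \<longleftrightarrow> V \<in> borel_measurable lebesgue \<and>
    (if CARD('n) \<ge> 2 then
       ((\<lambda>r. SUP x. \<integral>\<^sup>+ y. indicator (ball x r) y * ennreal (green_kernel (x - y)) * V y \<partial>lebesgue)
          \<longlongrightarrow> 0) (at_right 0)
     else (SUP x. \<integral>\<^sup>+ y. indicator (cball x 1) y * V y \<partial>lebesgue) < \<infinity>)"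

definition kato_class_loc :: "(real ^ 'n \<Rightarrow> ennreal) \<Rightarrow> bool" where
  "kato_class_loc V \<longleftrightarrow> (\<forall>R>0. kato_class (\<lambda>y. indicator (ball 0 R) y * V y))"

definition lattice_pt :: "int ^ 'n \<Rightarrow> real ^ 'n" where
  "lattice_pt q = (\<chi> i. real_of_int (q $ i))"

definition Znorm :: "real \<Rightarrow> 'n::finite itself \<Rightarrow> real" where
  "Znorm \<theta> _ = (\<integral>x. exp (- (norm (x :: real ^ 'n) powr \<theta>)) \<partial>lborel)"

definition V_xi :: "(real ^ 'n \<Rightarrow> real) \<Rightarrow> (int ^ 'n \<Rightarrow> 'w \<Rightarrow> real ^ 'n) \<Rightarrow> 'w \<Rightarrow> real ^ 'n \<Rightarrow> ennreal" where
  "V_xi u \<xi> \<omega> x = (\<Sum>\<^sub>\<infinity> q. ennreal (u (x - lattice_pt q - \<xi> q \<omega>)))"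

end

theory Submission
  imports Defs "HOL-Real_Asymp.Real_Asymp"
begin

text \<open>
  The Kato class is translation invariant, monotone and closed under finite sums, and it
  contains the nonnegative constants (a constant is dominated on every small ball by a multiple
  of a translate of \<open>u\<close>, since \<open>u\<close> is bounded below near some point).
  By Borel--Cantelli, almost surely only finitely many sites \<open>q\<close> are displaced by more than
  \<open>|q|/2\<close>: the probabilities have stretched exponential tails in \<open>|q|\<close>, so they are dominated
  by \<open>(1 + |q|)\<^sup>-\<^sup>\<alpha>\<close>, which is summable over \<open>\<int>\<^sup>d\<close> because \<open>\<alpha> > d\<close>.
  On a ball of radius \<open>R\<close> the potential is then bounded by finitely many translates of \<open>u\<close>
  plus the constant \<open>\<Sum>\<^sub>q C (1 + |q|)\<^sup>-\<^sup>\<alpha>\<close> coming from the decay of \<open>u\<close> at infinity.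
\<close>

section \<open>Translations of Lebesgue measure\<close>

lemma
  fixes a :: "'a::euclidean_space"
  shows distr_lebesgue_translation: "distr lebesgue lebesgue (\<lambda>x. a + x) = lebesgue"
    and lebesgue_translation_measurable: "(\<lambda>x. a + x) \<in> lebesgue \<rightarrow>\<^sub>M lebesgue"
proof -
  have T: "(\<lambda>x::'a. a + (\<Sum>j\<in>Basis. (1 * (x \<bullet> j)) *\<^sub>R j)) = (\<lambda>x. a + x)"
    by (simp add: euclidean_representation)
  have "lebesgue = density (distr lebesgue lebesgue (\<lambda>x. a + x)) (\<lambda>_. 1)"
    using lebesgue_affine_euclidean[of "\<lambda>_. 1" a] unfolding T by simp
  then show "distr lebesgue lebesgue (\<lambda>x. a + x) = lebesgue"
    by (simp add: density_1)
  show "(\<lambda>x. a + x) \<in> lebesgue \<rightarrow>\<^sub>M lebesgue"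
    using lebesgue_affine_measurable[of "\<lambda>_. 1" a] unfolding T by simp
qed

lemma nn_integral_lebesgue_translation:
  fixes f :: "'a::euclidean_space \<Rightarrow> ennreal"
  assumes "f \<in> borel_measurable lebesgue"
  shows "(\<integral>\<^sup>+y. f (a + y) \<partial>lebesgue) = (\<integral>\<^sup>+y. f y \<partial>lebesgue)"
  using nn_integral_distr[OF lebesgue_translation_measurable, of f a] assms
  by (simp add: distr_lebesgue_translation)

lemma borel_measurable_lebesgue_translation:
  fixes f :: "'a::euclidean_space \<Rightarrow> ennreal"
  assumes "f \<in> borel_measurable lebesgue"
  shows "(\<lambda>y. f (y - a)) \<in> borel_measurable lebesgue"
  using measurable_comp[OF lebesgue_translation_measurable[of "-a"] assms]
  by (simp add: o_def algebra_simps)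

lemma SUP_translation:
  fixes F :: "'a::ab_group_add \<Rightarrow> 'b::complete_lattice"
  shows "(SUP x. F (x - a)) = (SUP x. F x)"
proof (rule antisym)
  show "(SUP x. F (x - a)) \<le> (SUP x. F x)"
    by (intro SUP_least SUP_upper) simp
  show "(SUP x. F x) \<le> (SUP x. F (x - a))"
  proof (rule SUP_least)
    fix x
    show "F x \<le> (SUP x. F (x - a))"
      using SUP_upper[of "x + a" UNIV "\<lambda>x. F (x - a)"] by simp
  qed
qed

section \<open>Closure properties of the Kato class\<close>

lemma green_kernel_borel_measurable [measurable]: "green_kernel \<in> borel_measurable borel"
  unfolding green_kernel_def by measurable

lemma ennreal_green_kernel_borel_measurable [measurable]: "ennreal \<circ> green_kernel \<in> borel_measurable borel"
  unfolding comp_def by measurable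

definition kato_integral ::
    "('a::euclidean_space \<Rightarrow> 'a set) \<Rightarrow> ('a \<Rightarrow> ennreal) \<Rightarrow> ('a \<Rightarrow> ennreal) \<Rightarrow> 'a \<Rightarrow> ennreal" where
  "kato_integral S \<phi> V x = (\<integral>\<^sup>+ y. indicator (S x) y * \<phi> (x - y) * V y \<partial>lebesgue)"

lemma kato_class_iff:
  fixes V :: "real^'n \<Rightarrow> ennreal"
  shows "kato_class V \<longleftrightarrow> V \<in> borel_measurable lebesgue \<and>
    (if 2 \<le> CARD('n)
     then ((\<lambda>r. SUP x. kato_integral (\<lambda>x. ball x r) (ennreal \<circ> green_kernel) V x) \<longlongrightarrow> 0) (at_right 0)
     else (SUP x. kato_integral (\<lambda>x. cball x 1) (\<lambda>_. 1) V x) < \<infinity>)"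
  unfolding kato_class_def kato_integral_def by simp

lemma kato_integrand_measurable:
  fixes V \<phi> :: "'a::euclidean_space \<Rightarrow> ennreal"
  assumes V: "V \<in> borel_measurable lebesgue"
    and \<phi> [measurable]: "\<phi> \<in> borel_measurable borel" and S [measurable]: "S x \<in> sets borel"
  shows "(\<lambda>y. indicator (S x) y * \<phi> (x - y) * V y) \<in> borel_measurable lebesgue"
proof -
  have "(\<lambda>y. indicator (S x) y * \<phi> (x - y)) \<in> borel_measurable lborel"
    by measurable
  then have "(\<lambda>y. indicator (S x) y * \<phi> (x - y)) \<in> borel_measurable lebesgue"
    by (rule measurable_completion)
  then show ?thesis
    using V by (rule borel_measurable_times_ennreal)
qed

lemma kato_integral_translation:
  fixes V \<phi> :: "'a::euclidean_space \<Rightarrow> ennreal"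
  assumes V: "V \<in> borel_measurable lebesgue" and \<phi>: "\<phi> \<in> borel_measurable borel"
    and S: "\<And>x. S x \<in> sets borel" and S_translation: "\<And>x z. a + z \<in> S x \<longleftrightarrow> z \<in> S (x - a)"
  shows "kato_integral S \<phi> (\<lambda>y. V (y - a)) x = kato_integral S \<phi> V (x - a)"
proof -
  have "kato_integral S \<phi> (\<lambda>y. V (y - a)) x =
      (\<integral>\<^sup>+ y. indicator (S x) (a + y) * \<phi> (x - (a + y)) * V (a + y - a) \<partial>lebesgue)"
    unfolding kato_integral_def
    by (rule nn_integral_lebesgue_translation[symmetric],
        rule kato_integrand_measurable[OF borel_measurable_lebesgue_translation[OF V] \<phi> S])
  also have "\<dots> = kato_integral S \<phi> V (x - a)"
  proof -
    have shift: "indicator (S x) (a + y) = (indicator (S (x - a)) y :: ennreal)" for y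
      by (simp add: indicator_def S_translation)
    show ?thesis
      unfolding kato_integral_def by (intro nn_integral_cong) (simp only: shift, simp add: algebra_simps)
  qed
  finally show ?thesis .
qed

lemma kato_integral_mono:
  "(\<And>y. W y \<le> V y) \<Longrightarrow> kato_integral S \<phi> W x \<le> kato_integral S \<phi> V x"
  unfolding kato_integral_def by (intro nn_integral_mono mult_left_mono) auto

lemma kato_integral_add:
  fixes V W \<phi> :: "'a::euclidean_space \<Rightarrow> ennreal"
  assumes "V \<in> borel_measurable lebesgue" "W \<in> borel_measurable lebesgue"
    "\<phi> \<in> borel_measurable borel" "S x \<in> sets borel"
  shows "kato_integral S \<phi> (\<lambda>y. V y + W y) x = kato_integral S \<phi> V x + kato_integral S \<phi> W x"
  unfolding kato_integral_def
  by (subst nn_integral_add[symmetric])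
     (auto intro!: kato_integrand_measurable assms nn_integral_cong simp: distrib_left)

lemma kato_integral_cmult:
  fixes W \<phi> :: "'a::euclidean_space \<Rightarrow> ennreal"
  assumes "W \<in> borel_measurable lebesgue" "\<phi> \<in> borel_measurable borel" "S x \<in> sets borel"
  shows "kato_integral S \<phi> (\<lambda>y. k * W y) x = k * kato_integral S \<phi> W x"
  unfolding kato_integral_def nn_integral_cmult[OF kato_integrand_measurable[of W \<phi> S x, OF assms], symmetric]
  by (intro nn_integral_cong) (simp add: ac_simps)

lemma tendsto_zero_ennreal_le:
  fixes f g :: "'a \<Rightarrow> ennreal"
  assumes "(g \<longlongrightarrow> 0) F" "eventually (\<lambda>r. f r \<le> g r) F"
  shows "(f \<longlongrightarrow> 0) F"
  by (rule tendsto_sandwich[of "\<lambda>_. 0" f F g 0]) (use assms in auto)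

lemma kato_class_translation:
  fixes V :: "real^'n \<Rightarrow> ennreal"
  assumes "kato_class V"
  shows "kato_class (\<lambda>y. V (y - a))"
proof -
  have V: "V \<in> borel_measurable lebesgue"
    using assms by (simp add: kato_class_iff)
  have ball: "(SUP x. kato_integral (\<lambda>x. ball x r) (ennreal \<circ> green_kernel) (\<lambda>y. V (y - a)) x) =
        (SUP x. kato_integral (\<lambda>x. ball x r) (ennreal \<circ> green_kernel) V x)" for r
    by (subst kato_integral_translation[OF V])
       (auto simp: dist_norm algebra_simps intro: SUP_translation)
  have cball: "(SUP x. kato_integral (\<lambda>x. cball x 1) (\<lambda>_. 1) (\<lambda>y. V (y - a)) x) =
        (SUP x. kato_integral (\<lambda>x. cball x 1) (\<lambda>_. 1) V x)"
    by (subst kato_integral_translation[OF V])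
       (auto simp: dist_norm algebra_simps intro: SUP_translation)
  show ?thesis
    using assms borel_measurable_lebesgue_translation[OF V, of a]
    by (cases "2 \<le> CARD('n)") (simp_all add: kato_class_iff ball cball)
qed

lemma kato_class_mono:
  fixes V W :: "real^'n \<Rightarrow> ennreal"
  assumes V: "kato_class V" and W: "W \<in> borel_measurable lebesgue" and le: "\<And>y. W y \<le> V y"
  shows "kato_class W"
proof -
  have SUP_le: "(SUP x. kato_integral S \<phi> W x) \<le> (SUP x. kato_integral S \<phi> V x)" for S \<phi>
    by (intro SUP_mono) (auto intro: kato_integral_mono le)
  show ?thesis
  proof (cases "2 \<le> CARD('n)")
    case True
    then have "((\<lambda>r. SUP x. kato_integral (\<lambda>x. ball x r) (ennreal \<circ> green_kernel) V x) \<longlongrightarrow> 0) (at_right 0)"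
      using V by (simp add: kato_class_iff)
    then have "((\<lambda>r. SUP x. kato_integral (\<lambda>x. ball x r) (ennreal \<circ> green_kernel) W x) \<longlongrightarrow> 0) (at_right 0)"
      by (rule tendsto_zero_ennreal_le) (intro always_eventually allI SUP_le)
    then show ?thesis
      using True W by (simp add: kato_class_iff)
  next
    case False
    then have "(SUP x. kato_integral (\<lambda>x. cball x 1) (\<lambda>_. 1) V x) < \<infinity>"
      using V by (simp add: kato_class_iff)
    then have "(SUP x. kato_integral (\<lambda>x. cball x 1) (\<lambda>_. 1) W x) < \<infinity>"
      by (rule le_less_trans[OF SUP_le])
    then show ?thesis
      using False W by (simp add: kato_class_iff)
  qed
qed

lemma kato_class_add:
  fixes V W :: "real^'n \<Rightarrow> ennreal"
  assumes V: "kato_class V" and W: "kato_class W"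
  shows "kato_class (\<lambda>y. V y + W y)"
proof -
  have Vm: "V \<in> borel_measurable lebesgue" and Wm: "W \<in> borel_measurable lebesgue"
    using V W by (auto simp: kato_class_iff)
  have SUP_le: "(SUP x. kato_integral S \<phi> (\<lambda>y. V y + W y) x) \<le>
      (SUP x. kato_integral S \<phi> V x) + (SUP x. kato_integral S \<phi> W x)"
    if "\<phi> \<in> borel_measurable borel" "\<And>x. S x \<in> sets borel" for S \<phi>
    using that
    by (subst kato_integral_add[OF Vm Wm]) (auto intro: SUP_least[OF add_mono[OF SUP_upper SUP_upper]])
  show ?thesis
  proof (cases "2 \<le> CARD('n)")
    case True
    have "((\<lambda>r. (SUP x. kato_integral (\<lambda>x. ball x r) (ennreal \<circ> green_kernel) V x) +
                (SUP x. kato_integral (\<lambda>x. ball x r) (ennreal \<circ> green_kernel) W x)) \<longlongrightarrow> 0)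
          (at_right 0)"
      using tendsto_add[of _ 0 _ _ 0] V W True by (fastforce simp: kato_class_iff)
    then have "((\<lambda>r. SUP x. kato_integral (\<lambda>x. ball x r) (ennreal \<circ> green_kernel) (\<lambda>y. V y + W y) x)
                 \<longlongrightarrow> 0) (at_right 0)"
      by (rule tendsto_zero_ennreal_le, intro always_eventually allI SUP_le) auto
    then show ?thesis
      using True Vm Wm by (simp add: kato_class_iff)
  next
    case False
    then have "(SUP x. kato_integral (\<lambda>x. cball x 1) (\<lambda>_. 1) V x) +
               (SUP x. kato_integral (\<lambda>x. cball x 1) (\<lambda>_. 1) W x) < \<infinity>"
      using V W by (auto simp: kato_class_iff ennreal_add_less_top)
    then have "(SUP x. kato_integral (\<lambda>x. cball x 1) (\<lambda>_. 1) (\<lambda>y. V y + W y) x) < \<infinity>"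
      by (rule le_less_trans[rotated]) (rule SUP_le, auto)
    then show ?thesis
      using False Vm Wm by (simp add: kato_class_iff)
  qed
qed

lemma kato_class_sum:
  fixes f :: "'q \<Rightarrow> real^'n \<Rightarrow> ennreal"
  assumes "finite F" "\<And>q. q \<in> F \<Longrightarrow> kato_class (f q)"
  shows "kato_class (\<lambda>y. \<Sum>q\<in>F. f q y)"
  using assms
proof (induction F rule: finite_induct)
  case empty
  then show ?case
    by (simp add: kato_class_iff kato_integral_def)
next
  case (insert q F)
  then show ?case
    by (simp add: kato_class_add)
qed

lemma SUP_kato_integral_const_le:
  fixes U \<phi> :: "'a::euclidean_space \<Rightarrow> ennreal"
  assumes U: "U \<in> borel_measurable lebesgue" and \<phi>: "\<phi> \<in> borel_measurable borel"
    and S: "\<And>x. S x \<in> sets borel" and S_translation: "\<And>x a z. a + z \<in> S x \<longleftrightarrow> z \<in> S (x - a)"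
    and S_small: "\<And>x y. y \<in> S x \<Longrightarrow> dist x y \<le> 1"
    and K: "K \<ge> 0" and c: "c > 0" and U_ge: "\<And>y. y \<in> cball x0 1 \<Longrightarrow> ennreal c \<le> U y"
  shows "(SUP x. kato_integral S \<phi> (\<lambda>_. ennreal K) x) \<le> ennreal (K / c) * (SUP x. kato_integral S \<phi> U x)"
proof (rule SUP_least)
  fix x
  have "indicator (S x) y * \<phi> (x - y) * ennreal K \<le>
        indicator (S x) y * \<phi> (x - y) * (ennreal (K / c) * U (y - (x - x0)))" for y
  proof (cases "y \<in> S x")
    case True
    then have "y - (x - x0) \<in> cball x0 1"
      using S_small[OF True] by (simp add: dist_norm algebra_simps)
    then have "ennreal (K / c) * ennreal c \<le> ennreal (K / c) * U (y - (x - x0))"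
      by (intro mult_left_mono U_ge) auto
    moreover have "ennreal K = ennreal (K / c) * ennreal c"
      using c K by (simp add: ennreal_mult[symmetric])
    ultimately show ?thesis
      by (intro mult_left_mono) auto
  qed simp
  then have "kato_integral S \<phi> (\<lambda>_. ennreal K) x \<le>
      kato_integral S \<phi> (\<lambda>y. ennreal (K / c) * U (y - (x - x0))) x"
    unfolding kato_integral_def by (intro nn_integral_mono)
  also have "\<dots> = ennreal (K / c) * kato_integral S \<phi> (\<lambda>y. U (y - (x - x0))) x"
    by (rule kato_integral_cmult[OF borel_measurable_lebesgue_translation[OF U] \<phi> S])
  also have "kato_integral S \<phi> (\<lambda>y. U (y - (x - x0))) x = kato_integral S \<phi> U x0"
    using kato_integral_translation[of U \<phi> S "x - x0" x, OF U \<phi> S S_translation] by simp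
  also have "\<dots> \<le> (SUP x. kato_integral S \<phi> U x)"
    by (rule SUP_upper) simp
  finally show "kato_integral S \<phi> (\<lambda>_. ennreal K) x \<le> ennreal (K / c) * (SUP x. kato_integral S \<phi> U x)"
    by (simp add: mult_left_mono)
qed

text \<open>Comparing with a translate of \<open>U\<close> avoids computing integrals of the Green kernel.\<close>

lemma kato_class_const:
  fixes U :: "real^'n \<Rightarrow> ennreal"
  assumes U: "kato_class U" and c: "c > 0" and U_ge: "\<And>y. y \<in> cball x0 1 \<Longrightarrow> ennreal c \<le> U y"
    and K: "K \<ge> 0"
  shows "kato_class (\<lambda>_::real^'n. ennreal K)"
proof -
  have Um: "U \<in> borel_measurable lebesgue"
    using U by (simp add: kato_class_iff)
  note SUP_le = SUP_kato_integral_const_le[OF Um _ _ _ _ K c U_ge]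
  show ?thesis
  proof (cases "2 \<le> CARD('n)")
    case True
    have "((\<lambda>r. ennreal (K / c) * (SUP x. kato_integral (\<lambda>x. ball x r) (ennreal \<circ> green_kernel) U x))
          \<longlongrightarrow> 0) (at_right 0)"
      using U True ennreal_tendsto_cmult[of "ennreal (K / c)" _ 0] by (fastforce simp: kato_class_iff)
    moreover have "eventually (\<lambda>r. r \<le> 1) (at_right (0::real))"
      by (auto simp: eventually_at_right[OF zero_less_one] intro!: exI[of _ 1])
    then have "eventually (\<lambda>r. (SUP x. kato_integral (\<lambda>x. ball x r) (ennreal \<circ> green_kernel) (\<lambda>_::real^'n. ennreal K) x)
        \<le> ennreal (K / c) * (SUP x. kato_integral (\<lambda>x. ball x r) (ennreal \<circ> green_kernel) U x)) (at_right 0)"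
    proof eventually_elim
      case (elim r)
      show ?case
        by (rule SUP_le) (use elim in \<open>auto simp: dist_norm algebra_simps\<close>)
    qed
    ultimately have "((\<lambda>r. SUP x. kato_integral (\<lambda>x. ball x r) (ennreal \<circ> green_kernel) (\<lambda>_::real^'n. ennreal K) x)
          \<longlongrightarrow> 0) (at_right 0)"
      by (rule tendsto_zero_ennreal_le)
    then show ?thesis
      using True by (simp add: kato_class_iff)
  next
    case False
    have "(SUP x. kato_integral (\<lambda>x. cball x 1) (\<lambda>_. 1) (\<lambda>_::real^'n. ennreal K) x)
        \<le> ennreal (K / c) * (SUP x. kato_integral (\<lambda>x. cball x 1) (\<lambda>_. 1) U x)"
      by (rule SUP_le) (auto simp: dist_norm algebra_simps)
    moreover have "ennreal (K / c) * (SUP x. kato_integral (\<lambda>x. cball x 1) (\<lambda>_. 1) U x) < \<infinity>"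
      using U False by (simp add: kato_class_iff ennreal_mult_less_top)
    ultimately show ?thesis
      using False by (simp add: kato_class_iff)
  qed
qed

section \<open>Sums over the lattice\<close>

lemma abs_lattice_component_le_norm: "\<bar>real_of_int (q $ i)\<bar> \<le> norm (lattice_pt q)"
  using component_le_norm_cart[of "lattice_pt q" i] by (simp add: lattice_pt_def)

lemma finite_lattice_points_in_cball: "finite {q :: int^'n. norm (lattice_pt q) \<le> T}"
proof -
  define B where "B = {-\<lceil>T\<rceil>..\<lceil>T\<rceil>}"
  have "{q :: int^'n. norm (lattice_pt q) \<le> T} \<subseteq> vec_lambda ` (PiE UNIV (\<lambda>_. B))"
  proof
    fix q :: "int^'n"
    assume "q \<in> {q. norm (lattice_pt q) \<le> T}"
    then have "\<bar>q $ i\<bar> \<le> \<lceil>T\<rceil>" for i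
      using abs_lattice_component_le_norm[of q i] by simp linarith
    then have "q $ i \<in> B" for i
      unfolding B_def by (meson abs_le_D1 abs_le_D2 atLeastAtMost_iff minus_le_iff)
    then have "vec_nth q \<in> PiE UNIV (\<lambda>_. B)"
      by (simp add: PiE_UNIV_domain)
    then show "q \<in> vec_lambda ` (PiE UNIV (\<lambda>_. B))"
      by (intro image_eqI[of _ _ "vec_nth q"]) (simp_all add: vec_nth_inverse)
  qed
  moreover have "finite (PiE (UNIV::'n set) (\<lambda>_. B))"
    by (intro finite_PiE) (auto simp: B_def)
  ultimately show ?thesis
    by (meson finite_imageI finite_subset)
qed

lemma summable_on_int_powr:
  assumes "\<beta> > 1"
  shows "(\<lambda>k::int. (1 + \<bar>real_of_int k\<bar>) powr (-\<beta>)) summable_on UNIV"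
proof -
  have "summable (\<lambda>n::nat. real (Suc n) powr (-\<beta>))"
    using assms by (subst summable_Suc_iff) (simp add: summable_real_powr_iff)
  then have nat: "(\<lambda>n::nat. (1 + real n) powr (-\<beta>)) summable_on UNIV"
    by (intro summable_nonneg_imp_summable_on) simp_all
  have "(\<lambda>k::int. (1 + \<bar>real_of_int k\<bar>) powr (-\<beta>)) summable_on range int"
    using nat by (subst summable_on_reindex) (auto simp: o_def)
  moreover have "(\<lambda>k::int. (1 + \<bar>real_of_int k\<bar>) powr (-\<beta>)) summable_on range (\<lambda>n. - int n)"
    using nat by (subst summable_on_reindex) (auto simp: o_def inj_def)
  moreover have "range int \<union> range (\<lambda>n. - int n) = UNIV"
  proof -
    have "k \<in> range int \<union> range (\<lambda>n. - int n)" for k :: int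
      by (cases "k \<ge> 0") (auto intro: image_eqI[of _ _ "nat k"] image_eqI[of _ _ "nat (-k)"])
    then show ?thesis
      by blast
  qed
  ultimately show ?thesis
    by (metis summable_on_union)
qed

text \<open>
  \<open>(1 + |q|)\<^sup>-\<^sup>\<alpha>\<close> is dominated by the product of \<open>(1 + |q\<^sub>i|)\<^sup>-\<^sup>\<alpha>\<^sup>/\<^sup>d\<close>, and a product of
  summable one-dimensional families is summable over \<open>\<int>\<^sup>d\<close>.
\<close>

lemma summable_on_lattice_powr:
  assumes \<alpha>: "\<alpha> > real CARD('n)"
  shows "(\<lambda>q::int^'n. (1 + norm (lattice_pt q)) powr (-\<alpha>)) summable_on UNIV"
proof -
  define \<beta> where "\<beta> = \<alpha> / CARD('n)"
  have \<beta>: "\<beta> > 1"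
    using \<alpha> by (simp add: \<beta>_def)
  define f where "f k = (1 + \<bar>real_of_int k\<bar>) powr (-\<beta>)" for k :: int
  have "Infinite_Set_Sum.abs_summable_on f UNIV"
    using summable_on_int_powr[OF \<beta>] abs_summable_equivalent[of f UNIV] by (simp add: f_def[abs_def])
  then have "Infinite_Set_Sum.abs_summable_on (\<lambda>g. \<Prod>i\<in>UNIV. f (g i)) (PiE (UNIV::'n set) (\<lambda>_. UNIV))"
    by (intro abs_summable_on_prod_PiE) auto
  then have "(\<lambda>g::'n \<Rightarrow> int. \<Prod>i\<in>UNIV. f (g i)) summable_on UNIV"
    using abs_summable_equivalent[of "\<lambda>g::'n \<Rightarrow> int. \<Prod>i\<in>UNIV. f (g i)" UNIV]
    by (simp add: f_def abs_summable_on_def[symmetric] prod_nonneg)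
  moreover have "bij_betw (vec_nth :: int^'n \<Rightarrow> 'n \<Rightarrow> int) UNIV UNIV"
    by (rule bij_betwI[of _ _ _ vec_lambda]) (auto simp: vec_lambda_inverse vec_nth_inverse)
  ultimately have products: "(\<lambda>q::int^'n. \<Prod>i\<in>UNIV. f (q $ i)) summable_on UNIV"
    using summable_on_reindex_bij_betw[of vec_nth UNIV UNIV "\<lambda>g. \<Prod>i\<in>UNIV. f (g i)"] by blast
  show ?thesis
  proof (rule summable_on_comparison_test[OF products])
    fix q :: "int^'n"
    have pos: "0 < 1 + norm (lattice_pt q)"
      by (simp add: add_pos_nonneg)
    have "(\<Prod>i\<in>UNIV. (1 + \<bar>real_of_int (q $ i)\<bar>) powr \<beta>) \<le> (\<Prod>i\<in>(UNIV::'n set). (1 + norm (lattice_pt q)) powr \<beta>)"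
      by (intro prod_mono conjI powr_mono2) (use \<beta> abs_lattice_component_le_norm in auto)
    also have "\<dots> = (1 + norm (lattice_pt q)) powr \<alpha>"
      using pos by (simp add: powr_realpow[symmetric] powr_powr \<beta>_def)
    finally have "inverse ((1 + norm (lattice_pt q)) powr \<alpha>) \<le> inverse (\<Prod>i\<in>UNIV. (1 + \<bar>real_of_int (q $ i)\<bar>) powr \<beta>)"
      by (intro le_imp_inverse_le prod_pos) (simp_all add: add_pos_nonneg)
    then show "(1 + norm (lattice_pt q)) powr (-\<alpha>) \<le> (\<Prod>i\<in>UNIV. f (q $ i))"
      by (simp add: f_def powr_minus prod_inversef[symmetric])
  qed simp
qed

lemma infsum_ennreal_le_finite_sum_add:
  fixes f :: "'a \<Rightarrow> ennreal" and g :: "'a \<Rightarrow> real"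
  assumes "finite F" and le: "\<And>q. q \<notin> F \<Longrightarrow> f q \<le> ennreal (g q)"
    and g: "g summable_on UNIV" "\<And>q. g q \<ge> 0"
  shows "(\<Sum>\<^sub>\<infinity>q. f q) \<le> (\<Sum>q\<in>F. f q) + ennreal (\<Sum>\<^sub>\<infinity>q. g q)"
proof -
  have "(\<Sum>\<^sub>\<infinity>q. f q) = (\<Sum>\<^sub>\<infinity>q\<in>F. f q) + (\<Sum>\<^sub>\<infinity>q\<in>-F. f q)"
    by (subst infsum_Un_disjoint[symmetric]) (auto intro!: nonneg_summable_on_complete)
  also have "(\<Sum>\<^sub>\<infinity>q\<in>F. f q) = (\<Sum>q\<in>F. f q)"
    using assms(1) by simp
  also have "(\<Sum>\<^sub>\<infinity>q\<in>-F. f q) \<le> (\<Sum>\<^sub>\<infinity>q. ennreal (g q))"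
    by (rule infsum_mono_neutral) (auto intro!: nonneg_summable_on_complete le)
  also have "(\<Sum>\<^sub>\<infinity>q. ennreal (g q)) = (SUP F\<in>{F. finite F}. \<Sum>q\<in>F. ennreal (g q))"
    using nonneg_infsum_complete[where f="\<lambda>q. ennreal (g q)" and A=UNIV] by simp
  also have "\<dots> = (SUP F\<in>{F. finite F}. ennreal (\<Sum>q\<in>F. g q))"
    using g(2) by (simp add: sum_ennreal)
  also have "\<dots> = ennreal (\<Sum>\<^sub>\<infinity>q. g q)"
    using infsum_nonneg_is_SUPREMUM_ennreal[OF g(1)] g(2) by simp
  finally show ?thesis
    by (simp add: add_left_mono)
qed

lemma infsum_ennreal_eq_suminf: "(\<Sum>\<^sub>\<infinity>n. f n) = (\<Sum>n. f n :: ennreal)"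
proof -
  have "(f has_sum (\<Sum>\<^sub>\<infinity>n. f n)) UNIV"
    by (intro summable_iff_has_sum_infsum[THEN iffD1] nonneg_summable_on_complete) simp
  then show ?thesis
    by (rule sums_unique[OF has_sum_imp_sums])
qed

lemma borel_measurable_infsum_ennreal:
  fixes f :: "'i::countable \<Rightarrow> 'a \<Rightarrow> ennreal"
  assumes "\<And>i. f i \<in> borel_measurable M"
  shows "(\<lambda>x. \<Sum>\<^sub>\<infinity>i. f i x) \<in> borel_measurable M"
proof (cases "finite (UNIV :: 'i set)")
  case True
  then show ?thesis
    using assms by simp
next
  case False
  define e :: "nat \<Rightarrow> 'i" where "e = from_nat_into UNIV"
  have e: "bij_betw e UNIV UNIV"
    unfolding e_def using False by (intro bij_betw_from_nat_into) auto
  have "(\<lambda>x. \<Sum>\<^sub>\<infinity>i. f i x) = (\<lambda>x. \<Sum>n. f (e n) x)"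
    by (subst infsum_reindex_bij_betw[OF e, symmetric]) (simp add: infsum_ennreal_eq_suminf)
  then show ?thesis
    using assms by (simp add: borel_measurable_suminf_order)
qed

section \<open>Tails of the stretched exponential distribution\<close>

lemma distributed_normalized_density:
  fixes X :: "'w \<Rightarrow> 'a::euclidean_space" and f :: "'a \<Rightarrow> real"
  assumes "prob_space M" and f: "f \<in> borel_measurable borel" "\<And>x. f x \<ge> 0"
    and D: "distributed M lborel X (\<lambda>x. ennreal (f x / Z))"
  shows "Z > 0" and "(\<integral>\<^sup>+x. ennreal (f x) \<partial>lborel) = ennreal Z"
proof -
  interpret prob_space M by fact
  have "emeasure M (X -` UNIV \<inter> space M) = (\<integral>\<^sup>+x. ennreal (f x / Z) * indicator UNIV x \<partial>lborel)"
    by (rule distributed_emeasure[OF D]) simp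
  then have one: "(\<integral>\<^sup>+x. ennreal (f x / Z) \<partial>lborel) = 1"
    by (simp add: emeasure_space_1)
  show Z: "Z > 0"
  proof (rule ccontr)
    assume "\<not> Z > 0"
    then have "ennreal (f x / Z) = 0" for x
      using f(2)[of x] by (simp add: divide_nonneg_nonpos ennreal_eq_0_iff)
    with one show False
      by simp
  qed
  have "(\<integral>\<^sup>+x. ennreal (f x) \<partial>lborel) = (\<integral>\<^sup>+x. ennreal Z * ennreal (f x / Z) \<partial>lborel)"
    using Z f(2) by (intro nn_integral_cong) (simp add: ennreal_mult[symmetric])
  also have "\<dots> = ennreal Z"
    using f(1) by (subst nn_integral_cmult) (simp_all add: one)
  finally show "(\<integral>\<^sup>+x. ennreal (f x) \<partial>lborel) = ennreal Z" .
qed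

lemma nn_integral_stretched_exp_half_finite:
  assumes \<theta>: "\<theta> > 0"
    and fin: "(\<integral>\<^sup>+x. ennreal (exp (- (norm (x::'a::euclidean_space) powr \<theta>))) \<partial>lborel) < \<infinity>"
  shows "(\<integral>\<^sup>+x. ennreal (exp (- (norm (x::'a) powr \<theta>) / 2)) \<partial>lborel) < \<infinity>"
proof -
  define c :: real where "c = (1/2) powr (1/\<theta>)"
  have c: "c > 0" and c_powr: "c powr \<theta> = 1/2"
    using \<theta> by (simp_all add: c_def powr_powr)
  have "(\<integral>\<^sup>+x. ennreal (exp (- (norm (x::'a) powr \<theta>))) \<partial>lborel)
      = (\<integral>\<^sup>+x. ennreal (exp (- (norm x powr \<theta>)))
           \<partial>density (distr lborel borel (\<lambda>x::'a. 0 + c *\<^sub>R x)) (\<lambda>_. \<bar>c\<bar> ^ DIM('a)))"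
    using c by (subst lborel_affine[symmetric]) simp_all
  also have "\<dots> = (\<integral>\<^sup>+x. ennreal (\<bar>c\<bar> ^ DIM('a)) * ennreal (exp (- (norm (c *\<^sub>R (x::'a)) powr \<theta>))) \<partial>lborel)"
    by (subst nn_integral_density) (auto simp: nn_integral_distr)
  also have "\<dots> = ennreal (\<bar>c\<bar> ^ DIM('a)) * (\<integral>\<^sup>+x. ennreal (exp (- (norm (x::'a) powr \<theta>) / 2)) \<partial>lborel)"
    using c by (subst nn_integral_cmult[symmetric]) (auto intro!: nn_integral_cong simp: powr_mult c_powr)
  finally show ?thesis
    using fin c by (auto simp: ennreal_mult_less_top)
qed

lemma powr_mult_stretched_exp_tendsto_0:
  fixes \<theta> \<alpha> :: real
  assumes "\<theta> > 0"
  shows "((\<lambda>t. (1 + t) powr \<alpha> * exp (- (t powr \<theta> / 2))) \<longlongrightarrow> 0) at_top"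
  using assms by real_asymp

lemma stretched_exp_le_powr:
  fixes \<theta> \<alpha> :: real
  assumes \<theta>: "\<theta> > 0" and \<alpha>: "\<alpha> \<ge> 0"
  obtains C where "C > 0" "\<And>t. t \<ge> 0 \<Longrightarrow> exp (- (t powr \<theta> / 2)) \<le> C * (1 + t) powr (-\<alpha>)"
proof -
  from powr_mult_stretched_exp_tendsto_0[OF \<theta>, of \<alpha>]
  have "eventually (\<lambda>t. (1 + t) powr \<alpha> * exp (- (t powr \<theta> / 2)) < 1) at_top"
    by (rule order_tendstoD) simp
  then obtain T where T: "\<And>t. t \<ge> T \<Longrightarrow> (1 + t) powr \<alpha> * exp (- (t powr \<theta> / 2)) < 1"
    by (auto simp: eventually_at_top_linorder)
  define C where "C = (1 + max T 0) powr \<alpha>"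
  have C: "C \<ge> 1"
    unfolding C_def using \<alpha> by (intro ge_one_powr_ge_zero) auto
  have bound: "(1 + t) powr \<alpha> * exp (- (t powr \<theta> / 2)) \<le> C" if t: "t \<ge> 0" for t
  proof (cases "t \<ge> T")
    case True
    then show ?thesis
      using T[of t] C by simp
  next
    case False
    have "(1 + t) powr \<alpha> * exp (- (t powr \<theta> / 2)) \<le> (1 + t) powr \<alpha>"
      by (rule mult_left_le) simp_all
    also have "\<dots> \<le> C"
      unfolding C_def using False t \<alpha> by (intro powr_mono2) auto
    finally show ?thesis .
  qed
  have le: "exp (- (t powr \<theta> / 2)) \<le> C * (1 + t) powr (-\<alpha>)" if "t \<ge> 0" for t :: real
  proof -
    have "exp (- (t powr \<theta> / 2)) = (1 + t) powr \<alpha> * exp (- (t powr \<theta> / 2)) * (1 + t) powr (-\<alpha>)"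
      using that by (simp add: powr_minus)
    also have "\<dots> \<le> C * (1 + t) powr (-\<alpha>)"
      by (rule mult_right_mono[OF bound[OF that]]) simp
    finally show ?thesis .
  qed
  show ?thesis
    by (rule that[of C]) (use C le in auto)
qed

text \<open>The tail is bounded via \<open>exp (-|x|\<^sup>\<theta>) \<le> exp (-s\<^sup>\<theta>/2) exp (-|x|\<^sup>\<theta>/2)\<close> on \<open>|x| > s\<close>.\<close>

lemma nn_integral_stretched_exp_tail_le_powr:
  assumes \<theta>: "\<theta> > 0" and \<alpha>: "\<alpha> \<ge> 0"
    and fin: "(\<integral>\<^sup>+x. ennreal (exp (- (norm (x::'a::euclidean_space) powr \<theta>))) \<partial>lborel) < \<infinity>"
  obtains C where "C \<ge> 0"
    "\<And>s. s \<ge> 0 \<Longrightarrow> (\<integral>\<^sup>+x. ennreal (exp (- (norm (x::'a) powr \<theta>))) * indicator {x. s < norm x} x \<partial>lborel)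
        \<le> ennreal (C * (1 + s) powr (-\<alpha>))"
proof -
  define I where "I = enn2real (\<integral>\<^sup>+x. ennreal (exp (- (norm (x::'a) powr \<theta>) / 2)) \<partial>lborel)"
  have I: "(\<integral>\<^sup>+x. ennreal (exp (- (norm (x::'a) powr \<theta>) / 2)) \<partial>lborel) = ennreal I" "I \<ge> 0"
    using nn_integral_stretched_exp_half_finite[OF \<theta> fin]
    by (simp_all add: I_def ennreal_enn2real less_top)
  obtain C where C: "C > 0" "\<And>t. t \<ge> 0 \<Longrightarrow> exp (- (t powr \<theta> / 2)) \<le> C * (1 + t) powr (-\<alpha>)"
    using stretched_exp_le_powr[OF \<theta> \<alpha>] by blast
  show ?thesis
  proof (rule that[of "C * I"])
    show "C * I \<ge> 0"
      using C I by simp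
    fix s :: real
    assume s: "s \<ge> 0"
    have "ennreal (exp (- (norm x powr \<theta>))) * indicator {x. s < norm x} x
        \<le> ennreal (exp (- (s powr \<theta> / 2))) * ennreal (exp (- (norm (x::'a) powr \<theta>) / 2))" for x
    proof (cases "s < norm x")
      case True
      then have "s powr \<theta> \<le> norm x powr \<theta>"
        using s \<theta> by (intro powr_mono2) auto
      then have "exp (- (norm x powr \<theta>)) \<le> exp (- (s powr \<theta> / 2)) * exp (- (norm x powr \<theta>) / 2)"
        by (simp add: exp_add[symmetric])
      then show ?thesis
        using True by (simp add: ennreal_mult[symmetric] ennreal_leI)
    qed simp
    then have "(\<integral>\<^sup>+x. ennreal (exp (- (norm (x::'a) powr \<theta>))) * indicator {x. s < norm x} x \<partial>lborel)
        \<le> (\<integral>\<^sup>+x. ennreal (exp (- (s powr \<theta> / 2))) * ennreal (exp (- (norm (x::'a) powr \<theta>) / 2)) \<partial>lborel)"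
      by (rule nn_integral_mono)
    also have "\<dots> = ennreal (exp (- (s powr \<theta> / 2)) * I)"
      using I by (subst nn_integral_cmult) (simp_all add: ennreal_mult)
    also have "\<dots> \<le> ennreal (C * I * (1 + s) powr (-\<alpha>))"
      using mult_right_mono[OF C(2)[OF s] I(2)] by (intro ennreal_leI) (simp add: ac_simps)
    finally show "(\<integral>\<^sup>+x. ennreal (exp (- (norm (x::'a) powr \<theta>))) * indicator {x. s < norm x} x \<partial>lborel)
        \<le> ennreal (C * I * (1 + s) powr (-\<alpha>))" .
  qed
qed

lemma AE_finitely_many_events:
  fixes A :: "'i::countable \<Rightarrow> 'a set"
  assumes "finite_measure M" and A: "\<And>i. A i \<in> sets M"
    and summable: "(\<lambda>i. measure M (A i)) summable_on UNIV"
  shows "AE x in M. finite {i. x \<in> A i}"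
proof (cases "finite (UNIV :: 'i set)")
  case True
  then show ?thesis
    by (auto intro!: AE_I2 finite_subset[OF subset_UNIV])
next
  case False
  interpret finite_measure M by fact
  define e :: "nat \<Rightarrow> 'i" where "e = from_nat_into UNIV"
  have e: "bij_betw e UNIV UNIV"
    unfolding e_def using False by (intro bij_betw_from_nat_into) auto
  have "summable (\<lambda>n. measure M (A (e n)))"
    using summable summable_on_reindex_bij_betw[OF e, of "\<lambda>i. measure M (A i)"]
    by (intro summable_on_imp_summable) (simp add: o_def)
  then have "AE x in M. eventually (\<lambda>n. x \<in> space M - A (e n)) sequentially"
    using A by (intro borel_cantelli_AE1) (auto simp: emeasure_eq_measure)
  then show ?thesis
  proof (rule AE_mp, intro AE_I2 impI)
    fix x
    assume "eventually (\<lambda>n. x \<in> space M - A (e n)) sequentially"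
    then obtain N where N: "\<And>n. n \<ge> N \<Longrightarrow> x \<notin> A (e n)"
      by (auto simp: eventually_sequentially)
    have "{i. x \<in> A i} \<subseteq> e ` {..<N}"
    proof
      fix i
      assume i: "i \<in> {i. x \<in> A i}"
      obtain n where n: "i = e n"
        using e unfolding bij_betw_def by blast
      then have "n < N"
        using N[of n] i by (cases "n < N") auto
      then show "i \<in> e ` {..<N}"
        using n by simp
    qed
    then show "finite {i. x \<in> A i}"
      by (rule finite_subset) simp
  qed
qed

lemma measure_distributed_norm_greater_le:
  fixes X :: "'w \<Rightarrow> 'a::euclidean_space"
  assumes "prob_space M" and Z: "Z > 0" and D: "distributed M lborel X (\<lambda>x. ennreal (f x / Z))"
    and f: "f \<in> borel_measurable borel" "\<And>x. f x \<ge> 0" and B: "B \<ge> 0"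
    and bound: "(\<integral>\<^sup>+x. ennreal (f x) * indicator {x. s < norm x} x \<partial>lborel) \<le> ennreal B"
  shows "measure M {\<omega>\<in>space M. s < norm (X \<omega>)} \<le> B / Z"
proof -
  interpret prob_space M by fact
  have "emeasure M {\<omega>\<in>space M. s < norm (X \<omega>)} = emeasure M (X -` {x. s < norm x} \<inter> space M)"
    by (intro arg_cong[where f="emeasure M"]) auto
  also have "\<dots> = (\<integral>\<^sup>+x. ennreal (f x / Z) * indicator {x. s < norm x} x \<partial>lborel)"
    by (rule distributed_emeasure[OF D]) simp
  also have "\<dots> = ennreal (1 / Z) * (\<integral>\<^sup>+x. ennreal (f x) * indicator {x. s < norm x} x \<partial>lborel)"
  proof -
    have "ennreal (f x / Z) = ennreal (1 / Z) * ennreal (f x)" for x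
      using Z f(2)[of x] by (simp add: ennreal_mult[symmetric])
    then show ?thesis
      using f(1) by (subst nn_integral_cmult[symmetric]) (simp_all add: mult.assoc)
  qed
  also have "\<dots> \<le> ennreal (1 / Z) * ennreal B"
    by (rule mult_left_mono[OF bound]) simp
  also have "\<dots> = ennreal (B / Z)"
    using Z B by (simp add: ennreal_mult[symmetric])
  finally show ?thesis
    using Z B by (simp add: emeasure_eq_measure)
qed

lemma one_plus_half_powr_le:
  fixes t \<alpha> :: real
  assumes "t \<ge> 0" "\<alpha> \<ge> 0"
  shows "(1 + t / 2) powr (-\<alpha>) \<le> 2 powr \<alpha> * (1 + t) powr (-\<alpha>)"
proof -
  have "(1 + t / 2) powr (-\<alpha>) \<le> ((1 + t) / 2) powr (-\<alpha>)"
    using assms by (intro powr_mono2') auto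
  also have "\<dots> = (1 + t) powr (-\<alpha>) / 2 powr (-\<alpha>)"
    by (rule powr_divide)
  also have "\<dots> = 2 powr \<alpha> * (1 + t) powr (-\<alpha>)"
    by (simp only: powr_minus[of 2 \<alpha>] divide_inverse inverse_inverse_eq mult.commute)
  finally show ?thesis .
qed

lemma AE_finitely_many_far_displacements:
  fixes \<xi> :: "int^'n \<Rightarrow> 'w \<Rightarrow> real^'n"
  assumes P: "prob_space M" and \<theta>: "\<theta> > 0" and \<alpha>: "\<alpha> > real CARD('n)"
    and D: "\<And>q. distributed M lborel (\<xi> q) (\<lambda>x. ennreal (exp (- (norm x powr \<theta>)) / Z))"
  shows "AE \<omega> in M. finite {q. norm (lattice_pt q) / 2 < norm (\<xi> q \<omega>)}"
proof -
  interpret prob_space M by (rule P)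
  have \<alpha>_nonneg: "\<alpha> \<ge> 0"
    using \<alpha> by linarith
  have Z: "Z > 0" and "(\<integral>\<^sup>+x. ennreal (exp (- (norm (x::real^'n) powr \<theta>))) \<partial>lborel) = ennreal Z"
    using distributed_normalized_density[OF P _ _ D[of 0]] by auto
  then have "(\<integral>\<^sup>+x. ennreal (exp (- (norm (x::real^'n) powr \<theta>))) \<partial>lborel) < \<infinity>"
    by simp
  then obtain C where C: "C \<ge> 0"
    "\<And>s. s \<ge> 0 \<Longrightarrow> (\<integral>\<^sup>+x. ennreal (exp (- (norm (x::real^'n) powr \<theta>))) * indicator {x. s < norm x} x \<partial>lborel)
        \<le> ennreal (C * (1 + s) powr (-\<alpha>))"
    using nn_integral_stretched_exp_tail_le_powr[OF \<theta> \<alpha>_nonneg] by blast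
  have far: "measure M {\<omega>\<in>space M. norm (lattice_pt q) / 2 < norm (\<xi> q \<omega>)}
      \<le> C / Z * 2 powr \<alpha> * (1 + norm (lattice_pt q)) powr (-\<alpha>)" for q
  proof -
    have "measure M {\<omega>\<in>space M. norm (lattice_pt q) / 2 < norm (\<xi> q \<omega>)}
        \<le> C * (1 + norm (lattice_pt q) / 2) powr (-\<alpha>) / Z"
      by (rule measure_distributed_norm_greater_le[OF P Z D _ _ _ C(2)]) (use C(1) in simp_all)
    also have "\<dots> \<le> C * (2 powr \<alpha> * (1 + norm (lattice_pt q)) powr (-\<alpha>)) / Z"
      using C(1) Z \<alpha>_nonneg by (intro divide_right_mono mult_left_mono one_plus_half_powr_le) simp_all
    finally show ?thesis
      by (simp add: field_simps)
  qed
  have [measurable]: "\<xi> q \<in> borel_measurable M" for q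
    using distributed_measurable[OF D[of q]] by simp
  have "(\<lambda>q. measure M {\<omega>\<in>space M. norm (lattice_pt q) / 2 < norm (\<xi> q \<omega>)}) summable_on UNIV"
    by (rule summable_on_comparison_test[OF summable_on_cmult_right[OF summable_on_lattice_powr[OF \<alpha>]] far])
       simp
  then have "AE \<omega> in M. finite {q. \<omega> \<in> {\<omega>\<in>space M. norm (lattice_pt q) / 2 < norm (\<xi> q \<omega>)}}"
    by (intro AE_finitely_many_events finite_measure_axioms) measurable
  then show ?thesis
    by (rule AE_mp, intro AE_I2 impI) simp
qed

section \<open>The potential on bounded sets\<close>

lemma asymp_power_law_bounds:
  fixes u :: "'a::real_normed_vector \<Rightarrow> real"
  assumes C0: "C0 > 0"
    and u_asymp: "((\<lambda>x. u x / (C0 * norm x powr (- \<alpha>))) \<longlongrightarrow> 1) at_infinity"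
  obtains b where "b \<ge> 1"
    "\<And>x. norm x \<ge> b \<Longrightarrow> u x \<le> 2 * C0 * norm x powr (-\<alpha>)"
    "\<And>x. norm x \<ge> b \<Longrightarrow> C0 / 2 * norm x powr (-\<alpha>) \<le> u x"
proof -
  have "eventually (\<lambda>x. dist (u x / (C0 * norm x powr (- \<alpha>))) 1 < 1/2) at_infinity"
    using tendstoD[OF u_asymp, of "1/2"] by simp
  then obtain b0 where b0: "\<And>x. norm x \<ge> b0 \<Longrightarrow> \<bar>u x / (C0 * norm x powr (- \<alpha>)) - 1\<bar> < 1/2"
    by (auto simp: eventually_at_infinity dist_real_def)
  define b where "b = max b0 1"
  have "u x \<le> 2 * (C0 * norm x powr (-\<alpha>)) \<and> C0 * norm x powr (-\<alpha>) / 2 \<le> u x"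
    if x: "norm x \<ge> b" for x
  proof -
    define D where "D = C0 * norm x powr (- \<alpha>)"
    have "norm x > 0"
      using x unfolding b_def by linarith
    then have D: "D > 0"
      using C0 by (simp add: D_def)
    have "\<bar>u x / D - 1\<bar> < 1/2"
      using b0[of x] x by (simp add: b_def D_def)
    then have "u x / D < 3/2" "1/2 < u x / D"
      by linarith+
    then have "u x < 3/2 * D" "D / 2 < u x"
      using D by (simp_all add: divide_less_eq less_divide_eq)
    then show ?thesis
      using D by (simp add: D_def[symmetric])
  qed
  then show ?thesis
    by (intro that[of b]) (auto simp: b_def mult.assoc)
qed

lemma power_law_lower_bound_on_unit_ball:
  fixes u :: "'a::euclidean_space \<Rightarrow> real"
  assumes b: "b \<ge> 1" and C: "C > 0" and \<alpha>: "\<alpha> \<ge> 0"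
    and lower: "\<And>x. norm x \<ge> b \<Longrightarrow> C * norm x powr (-\<alpha>) \<le> u x"
  obtains x0 c where "c > 0" "\<And>y. y \<in> cball x0 1 \<Longrightarrow> c \<le> u y"
proof -
  obtain x0 :: 'a where x0: "norm x0 = b + 1"
    using vector_choose_size[of "b + 1"] b by auto
  have "C * (b + 2) powr (-\<alpha>) \<le> u y" if "y \<in> cball x0 1" for y
  proof -
    have "norm y \<ge> b" "norm y \<le> b + 2"
      using that x0 norm_triangle_ineq2[of x0 y] norm_triangle_ineq2[of y x0]
      by (auto simp: dist_norm norm_minus_commute)
    then have "C * (b + 2) powr (-\<alpha>) \<le> C * norm y powr (-\<alpha>)"
      using C \<alpha> b by (intro mult_left_mono powr_mono2') auto
    also have "\<dots> \<le> u y"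
      using lower \<open>norm y \<ge> b\<close> .
    finally show ?thesis .
  qed
  then show ?thesis
    using C b by (intro that[of "C * (b + 2) powr (-\<alpha>)" x0]) auto
qed

text \<open>
  A site \<open>L\<close> outside the ball of radius \<open>4(R + b)\<close>, displaced by at most \<open>|L|/2\<close>,
  stays at distance at least \<open>|L|/4\<close> from the ball of radius \<open>R\<close>.
\<close>

lemma power_decay_at_displaced_site:
  fixes u :: "'a::real_normed_vector \<Rightarrow> real"
  assumes b: "b \<ge> 1" and \<alpha>: "\<alpha> > 0" and C: "C > 0"
    and decay: "\<And>x. norm x \<ge> b \<Longrightarrow> u x \<le> C * norm x powr (-\<alpha>)"
    and y: "norm y < R" and L: "4 * (R + b) < norm L" and X: "norm X \<le> norm L / 2"
  shows "u (y - (L + X)) \<le> C * 8 powr \<alpha> * (1 + norm L) powr (-\<alpha>)"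
proof -
  define z where "z = y - (L + X)"
  have "norm L \<le> norm y + norm X + norm z"
    using norm_triangle_ineq4[of "y - X" z] norm_triangle_ineq4[of y X]
    by (simp add: z_def algebra_simps)
  moreover have L': "4 * R + 4 * b < norm L"
    using L by simp
  ultimately have z: "norm L / 4 \<le> norm z"
    using y X b by linarith
  have Lb: "b \<le> norm L / 4"
    using y L' norm_ge_zero[of y] by linarith
  have "u z \<le> C * norm z powr (-\<alpha>)"
    using decay z Lb by simp
  also have "\<dots> \<le> C * (norm L / 4) powr (-\<alpha>)"
    using C \<alpha> z Lb b by (intro mult_left_mono powr_mono2') auto
  also have "(norm L / 4) powr (-\<alpha>) \<le> ((1 + norm L) / 8) powr (-\<alpha>)"
    using \<alpha> Lb b by (intro powr_mono2') auto
  also have "((1 + norm L) / 8) powr (-\<alpha>) = (1 + norm L) powr (-\<alpha>) / 8 powr (-\<alpha>)"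
    by (rule powr_divide)
  also have "\<dots> = 8 powr \<alpha> * (1 + norm L) powr (-\<alpha>)"
    by (simp only: powr_minus[of 8 \<alpha>] divide_inverse inverse_inverse_eq mult.commute)
  finally show ?thesis
    using C by (simp add: z_def mult_left_mono ac_simps)
qed

lemma kato_class_loc_V_xi:
  fixes u :: "real^'n \<Rightarrow> real" and \<xi> :: "int^'n \<Rightarrow> 'w \<Rightarrow> real^'n"
  assumes u_kato: "kato_class (\<lambda>x. ennreal (u x))"
    and const_kato: "\<And>K. K \<ge> 0 \<Longrightarrow> kato_class (\<lambda>_::real^'n. ennreal K)"
    and \<alpha>: "\<alpha> > real CARD('n)" and C: "C > 0" and b: "b \<ge> 1"
    and decay: "\<And>x. norm x \<ge> b \<Longrightarrow> u x \<le> C * norm x powr (-\<alpha>)"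
    and far: "finite {q. norm (lattice_pt q) / 2 < norm (\<xi> q \<omega>)}"
  shows "kato_class_loc (V_xi u \<xi> \<omega>)"
proof -
  have \<alpha>_pos: "\<alpha> > 0"
    using \<alpha> by (metis of_nat_0_less_iff order.strict_trans zero_less_card_finite)
  define a where "a q = lattice_pt q + \<xi> q \<omega>" for q
  have V: "V_xi u \<xi> \<omega> = (\<lambda>y. \<Sum>\<^sub>\<infinity>q. ennreal (u (y - a q)))"
    by (simp add: fun_eq_iff V_xi_def a_def diff_diff_eq)
  have V_measurable: "V_xi u \<xi> \<omega> \<in> borel_measurable lebesgue"
    using u_kato unfolding V
    by (intro borel_measurable_infsum_ennreal borel_measurable_lebesgue_translation)
       (simp add: kato_class_iff)
  define w where "w q = C * 8 powr \<alpha> * (1 + norm (lattice_pt q)) powr (-\<alpha>)" for q :: "int^'n"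
  have w: "w summable_on UNIV" "\<And>q. w q \<ge> 0"
    using C summable_on_cmult_right[OF summable_on_lattice_powr[OF \<alpha>], of "C * 8 powr \<alpha>"]
    by (simp_all add: w_def[abs_def] mult.assoc)
  show ?thesis
    unfolding kato_class_loc_def
  proof (intro allI impI)
    fix R :: real
    define F where "F = {q. norm (lattice_pt q) / 2 < norm (\<xi> q \<omega>)} \<union> {q. norm (lattice_pt q) \<le> 4 * (R + b)}"
    have F: "finite F"
      using far finite_lattice_points_in_cball by (simp add: F_def)
    have bound: "indicator (ball 0 R) y * V_xi u \<xi> \<omega> y
        \<le> (\<Sum>q\<in>F. ennreal (u (y - a q))) + ennreal (\<Sum>\<^sub>\<infinity>q. w q)" for y
    proof (cases "y \<in> ball 0 R")
      case True
      have "ennreal (u (y - a q)) \<le> ennreal (w q)" if "q \<notin> F" for q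
        using that True unfolding a_def w_def F_def
        by (intro ennreal_leI power_decay_at_displaced_site[OF b \<alpha>_pos C decay]) auto
      then show ?thesis
        using True by (simp add: V infsum_ennreal_le_finite_sum_add[OF F _ w])
    qed simp
    have "kato_class (\<lambda>y. (\<Sum>q\<in>F. ennreal (u (y - a q))) + ennreal (\<Sum>\<^sub>\<infinity>q. w q))"
      using w(2) by (intro kato_class_add kato_class_sum[OF F] kato_class_translation[OF u_kato]
          const_kato infsum_nonneg) auto
    moreover have "(\<lambda>y. indicator (ball 0 R) y * V_xi u \<xi> \<omega> y) \<in> borel_measurable lebesgue"
      using V_measurable by (intro borel_measurable_times_ennreal borel_measurable_indicator) auto
    ultimately show "kato_class (\<lambda>y. indicator (ball 0 R) y * V_xi u \<xi> \<omega> y)"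
      using bound by (rule kato_class_mono)
  qed
qed

theorem lemma7p1:
  fixes u :: "real ^ 'n \<Rightarrow> real"
    and M :: "'w measure"
    and \<xi> :: "int ^ 'n \<Rightarrow> 'w \<Rightarrow> real ^ 'n"
    and C0 \<alpha> \<theta> :: real
  assumes u_nonneg: "\<And>x. u x \<ge> 0"
    and u_kato: "kato_class (\<lambda>x. ennreal (u x))"
    and \<alpha>: "\<alpha> > real CARD('n)"
    and C0: "C0 > 0"
    and u_asymp: "((\<lambda>x. u x / (C0 * norm x powr (- \<alpha>))) \<longlongrightarrow> 1) at_infinity"
    and \<theta>: "\<theta> > 0"
    and P: "prob_space M"
    and indep: "prob_space.indep_vars M (\<lambda>_. borel) \<xi> UNIV"
    and distr: "\<And>q. distributed M lborel (\<xi> q)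
                  (\<lambda>x. ennreal (exp (- (norm x powr \<theta>)) / Znorm \<theta> TYPE('n)))"
  shows "AE \<omega> in M. kato_class_loc (V_xi u \<xi> \<omega>)"
proof -
  obtain b where b: "b \<ge> 1"
    and upper: "\<And>x. norm x \<ge> b \<Longrightarrow> u x \<le> 2 * C0 * norm x powr (-\<alpha>)"
    and lower: "\<And>x. norm x \<ge> b \<Longrightarrow> C0 / 2 * norm x powr (-\<alpha>) \<le> u x"
    using asymp_power_law_bounds[OF C0 u_asymp] by blast
  have "C0 / 2 > 0" "\<alpha> \<ge> 0"
    using C0 \<alpha> by simp_all
  then obtain x0 :: "real^'n" and c where c: "c > 0" "\<And>y. y \<in> cball x0 1 \<Longrightarrow> c \<le> u y"
    using power_law_lower_bound_on_unit_ball[OF b _ _ lower] by blast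
  have const_kato: "kato_class (\<lambda>_::real^'n. ennreal K)" if "K \<ge> 0" for K
    using c by (intro kato_class_const[of _ c x0, OF u_kato c(1) _ that]) (simp add: ennreal_leI)
  have "AE \<omega> in M. finite {q. norm (lattice_pt q) / 2 < norm (\<xi> q \<omega>)}"
    by (rule AE_finitely_many_far_displacements[OF P \<theta> \<alpha> distr])
  then show ?thesis
  proof (rule eventually_mono)
    fix \<omega>
    assume far: "finite {q. norm (lattice_pt q) / 2 < norm (\<xi> q \<omega>)}"
    have "2 * C0 > 0"
      using C0 by simp
    then show "kato_class_loc (V_xi u \<xi> \<omega>)"
      using kato_class_loc_V_xi[where \<xi>=\<xi> and \<omega>=\<omega>, OF u_kato const_kato \<alpha> _ b upper far] by blast
  qed
qed

end
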